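(* Let $H$ be a separable Hilbert space with orthonormal basis $\{e_n:n=0,1,2,\ldots\}$. For $n\geq 0$ let $L_n=\mathrm{Span}\{e_k:0\leq k\leq n\}$ and put $L_{-1}=\{0\}$. Let \[ H_{\mathrm{ra}}=\{x\in H: \sup_{n\geq 0} n^k d(x,L_{n-1})<\infty \text{ for all } k=0,1,2,\ldots\}, \] where $0^0=1$ and $d(x,L_{n-1})$ is the distance from $x$ to $L_{n-1}$. For $k\geq 0$ define $q_k(x)=\sup_{n\geq 0} n^k d(x,L_{n-1})$ for $x\in H_{\mathrm{ra}}$. Then $\{q_k:k=0,1,2,\ldots\}$ is a separating family of seminorms on $H_{\mathrm{ra}}$ inducing a Fréchet topology on $H_{\mathrm{ra}}$. Moreover, $x=\sum_{n=0}^\infty a_n(x)e_n\in H$ lies in $H_{\mathrm{ra}}$ if and only if $(a_n(x))_{n\geq 0}\in(s)$, and the map $x\mapsto (a_n(x))_{n\geq 0}$ is a topological isomorphism between the Fréchet spaces $H_{\mathrm{ra}}$ and $(s)$.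
   Context: $(s)$ denotes the space of rapidly decreasing sequences, i.e. complex sequences $(a_n)_{n\geq 0}$ with $\sup_n n^k|a_n|<\infty$ for all $k\geq 0$, with the Fréchet topology induced by the seminorms $(a_n)\mapsto\sup_n n^k|a_n|$, $k=0,1,2,\ldots$. *)

theory Defs
  imports "HOL-Analysis.Analysis" "HOL-Library.Function_Algebras"
begin

(* A complex Hilbert space is encoded as a real Hilbert space (type class
   real_inner + complete_space) together with a complex structure J
   (multiplication by the imaginary unit): J is real-linear, J (J x) = -x,
   and J is orthogonal. *)
definition complex_structure :: "('a::real_inner \<Rightarrow> 'a) \<Rightarrow> bool" where
  "complex_structure J \<longleftrightarrow> linear J \<and> (\<forall>x. J (J x) = - x)
      \<and> (\<forall>x y. inner (J x) (J y) = inner x y)"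

definition cscale :: "('a::real_inner \<Rightarrow> 'a) \<Rightarrow> complex \<Rightarrow> 'a \<Rightarrow> 'a" where
  "cscale J c x = Re c *\<^sub>R x + Im c *\<^sub>R J x"

(* complex inner product, linear in the first argument *)
definition cinner :: "('a::real_inner \<Rightarrow> 'a) \<Rightarrow> 'a \<Rightarrow> 'a \<Rightarrow> complex" where
  "cinner J x y = Complex (inner x y) (inner x (J y))"

definition cspan :: "('a::real_inner \<Rightarrow> 'a) \<Rightarrow> 'a set \<Rightarrow> 'a set" where
  "cspan J A = span (A \<union> J ` A)"

definition orthonormal_basis :: "('a::real_inner \<Rightarrow> 'a) \<Rightarrow> (nat \<Rightarrow> 'a) \<Rightarrow> bool" where
  "orthonormal_basis J e \<longleftrightarrow>
     (\<forall>i j. cinner J (e i) (e j) = (if i = j then 1 else 0))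
     \<and> closure (cspan J (range e)) = UNIV"

(* Lspan J e n = L_{n-1} = Span{e_k : k < n}; in particular Lspan J e 0 = {0} = L_{-1} *)
definition Lspan :: "('a::real_inner \<Rightarrow> 'a) \<Rightarrow> (nat \<Rightarrow> 'a) \<Rightarrow> nat \<Rightarrow> 'a set" where
  "Lspan J e n = cspan J (e ` {..<n})"

definition H_ra :: "('a::real_inner \<Rightarrow> 'a) \<Rightarrow> (nat \<Rightarrow> 'a) \<Rightarrow> 'a set" where
  "H_ra J e = {x. \<forall>k::nat. bdd_above (range (\<lambda>n::nat. real n ^ k * infdist x (Lspan J e n)))}"

(* q_k(x) = sup_n n^k d(x, L_{n-1})   (real 0 ^ 0 = 1) *)
definition qsem :: "('a::real_inner \<Rightarrow> 'a) \<Rightarrow> (nat \<Rightarrow> 'a) \<Rightarrow> nat \<Rightarrow> 'a \<Rightarrow> real" where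
  "qsem J e k x = (SUP n::nat. real n ^ k * infdist x (Lspan J e n))"

definition fourier_coeffs :: "('a::real_inner \<Rightarrow> 'a) \<Rightarrow> (nat \<Rightarrow> 'a) \<Rightarrow> 'a \<Rightarrow> nat \<Rightarrow> complex" where
  "fourier_coeffs J e x = (\<lambda>n. cinner J x (e n))"

definition rapid_seq :: "(nat \<Rightarrow> complex) set" where
  "rapid_seq = {a. \<forall>k::nat. bdd_above (range (\<lambda>n::nat. real n ^ k * cmod (a n)))}"

definition ssem :: "nat \<Rightarrow> (nat \<Rightarrow> complex) \<Rightarrow> real" where
  "ssem k a = (SUP n::nat. real n ^ k * cmod (a n))"

definition seq_scale :: "complex \<Rightarrow> (nat \<Rightarrow> complex) \<Rightarrow> nat \<Rightarrow> complex" where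
  "seq_scale c a = (\<lambda>n. c * a n)"

definition seminorm_on :: "'v::ab_group_add set \<Rightarrow> (complex \<Rightarrow> 'v \<Rightarrow> 'v) \<Rightarrow> ('v \<Rightarrow> real) \<Rightarrow> bool" where
  "seminorm_on S smul p \<longleftrightarrow> 0 \<in> S
     \<and> (\<forall>x\<in>S. \<forall>y\<in>S. x + y \<in> S \<and> p (x + y) \<le> p x + p y)
     \<and> (\<forall>c. \<forall>x\<in>S. smul c x \<in> S \<and> p (smul c x) = cmod c * p x)"

(* (p k)_k is a separating family of seminorms on S inducing a Frechet topology,
   i.e. the induced (metrizable, locally convex) topology is complete:
   every sequence which is Cauchy for all p k converges for all p k to a point of S *)
definition frechet_seminorms :: "'v::ab_group_add set \<Rightarrow> (complex \<Rightarrow> 'v \<Rightarrow> 'v) \<Rightarrow> (nat \<Rightarrow> 'v \<Rightarrow> real) \<Rightarrow> bool" where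
  "frechet_seminorms S smul p \<longleftrightarrow>
     (\<forall>k. seminorm_on S smul (p k))
     \<and> (\<forall>x\<in>S. (\<forall>k. p k x = 0) \<longrightarrow> x = 0)
     \<and> (\<forall>X. (\<forall>n. X n \<in> S) \<and>
            (\<forall>k. \<forall>\<epsilon>>0. \<exists>N. \<forall>m\<ge>N. \<forall>n\<ge>N. p k (X m - X n) < \<epsilon>)
          \<longrightarrow> (\<exists>y\<in>S. \<forall>k. (\<lambda>n. p k (X n - y)) \<longlonglongrightarrow> 0))"

definition seminorm_topology :: "'v::ab_group_add set \<Rightarrow> (nat \<Rightarrow> 'v \<Rightarrow> real) \<Rightarrow> 'v topology" where
  "seminorm_topology S p = topology_generated_by
     {{y \<in> S. p k (y - x) < r} | k x r. x \<in> S \<and> r > 0}"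

end

theory Submission
  imports Defs
begin

text \<open>Let a_m be the Fourier coefficients of x. The partial Fourier sum over m < n is the
  orthogonal projection onto L_(n-1), so by Pythagoras d(x, L_(n-1))^2 = \<Sum>_(m \<ge> n) |a_m|^2.
  Hence |a_n| \<le> d(x, L_(n-1)), which gives s_k(a) \<le> q_k(x). Conversely, if m^(k+1) |a_m| \<le> B
  for all m, then n^(2k) \<Sum>_(m \<ge> n) |a_m|^2 \<le> B^2 \<Sum>_(m \<ge> n) 1/m^2 \<le> 2B^2/n, which gives
  q_k(x) \<le> s_k(a) + 2 s_(k+1)(a). These two estimates yield both the characterisation of H_ra
  and the bicontinuity of x \<mapsto> a. The coefficient map is onto because the partial sums of a
  rapidly decreasing sequence are Cauchy in H, and H_ra is complete because a q-Cauchy sequence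
  converges in norm and the bounds m^k d(x, L_(m-1)) \<le> \<epsilon> pass to the limit.\<close>

section \<open>Tails of the series of inverse squares\<close>

lemma sum_inverse_squares_le:
  assumes "1 \<le> n"
  shows "(\<Sum>m\<in>{n..<n+j}. 1 / (real m)\<^sup>2) \<le> 2 / real n - 2 / real (n + j)"
proof (induction j)
  case 0
  then show ?case by simp
next
  case (Suc j)
  define M where "M = real (n + j)"
  have M: "1 \<le> M" using assms by (simp add: M_def)
  have "1 / M\<^sup>2 = (1 / M) * (1 / M)" by (simp add: power2_eq_square)
  also have "\<dots> \<le> (1 / M) * (2 / (M + 1))"
    using M by (intro mult_left_mono) (auto simp: field_simps)
  also have "\<dots> = 2 / M - 2 / (M + 1)" using M by (simp add: field_simps)
  finally have "1 / M\<^sup>2 \<le> 2 / M - 2 / (M + 1)" .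
  then show ?case using Suc by (simp add: M_def add.commute)
qed

lemma tail_sum_squares_le:
  fixes c :: "nat \<Rightarrow> real"
  assumes bound: "\<And>m. n \<le> m \<Longrightarrow> real m * c m \<le> B"
    and nonneg: "\<And>m. 0 \<le> c m" and "1 \<le> n"
  shows "(\<Sum>m\<in>{n..<n+j}. (c m)\<^sup>2) \<le> 2 * B\<^sup>2 / real n"
proof -
  have "(c m)\<^sup>2 \<le> B\<^sup>2 * (1 / (real m)\<^sup>2)" if "m \<in> {n..<n+j}" for m
  proof -
    have m: "n \<le> m" "1 \<le> real m" using that \<open>1 \<le> n\<close> by auto
    have "(c m)\<^sup>2 = (real m * c m)\<^sup>2 / (real m)\<^sup>2" using m by (simp add: field_simps)
    also have "\<dots> \<le> B\<^sup>2 / (real m)\<^sup>2"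
      using bound[OF m(1)] nonneg[of m] by (intro divide_right_mono power_mono) auto
    finally show ?thesis by simp
  qed
  then have "(\<Sum>m\<in>{n..<n+j}. (c m)\<^sup>2) \<le> (\<Sum>m\<in>{n..<n+j}. B\<^sup>2 * (1 / (real m)\<^sup>2))"
    by (rule sum_mono)
  also have "\<dots> = B\<^sup>2 * (\<Sum>m\<in>{n..<n+j}. 1 / (real m)\<^sup>2)"
    by (simp add: sum_distrib_left)
  also have "\<dots> \<le> B\<^sup>2 * (2 / real n)"
  proof (intro mult_left_mono)
    have "0 \<le> 2 / real (n + j)" by simp
    then show "(\<Sum>m\<in>{n..<n+j}. 1 / (real m)\<^sup>2) \<le> 2 / real n"
      using sum_inverse_squares_le[OF \<open>1 \<le> n\<close>, of j] by linarith
  qed simp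
  finally show ?thesis by (simp add: mult.commute)
qed

section \<open>The sequence space \<open>(s)\<close>\<close>

lemma bdd_above_range_iff: "bdd_above (range f) \<longleftrightarrow> (\<exists>M. \<forall>n. f n \<le> M)"
  by (auto simp: bdd_above_def)

lemma mem_rapid_seq_iff: "a \<in> rapid_seq \<longleftrightarrow> (\<forall>k. \<exists>M. \<forall>n. real n ^ k * cmod (a n) \<le> M)"
  by (simp add: rapid_seq_def bdd_above_range_iff)

lemma ssem_upper: "a \<in> rapid_seq \<Longrightarrow> real n ^ k * cmod (a n) \<le> ssem k a"
  unfolding ssem_def by (rule cSUP_upper) (auto simp: rapid_seq_def)

lemma ssem_least: "(\<And>n. real n ^ k * cmod (a n) \<le> M) \<Longrightarrow> ssem k a \<le> M"
  unfolding ssem_def by (rule cSUP_least) auto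

lemma ssem_nonneg: "a \<in> rapid_seq \<Longrightarrow> 0 \<le> ssem k a"
  using ssem_upper[of a 0 k] by (cases k) (auto intro: order_trans[OF norm_ge_zero])

lemma ssem_zero [simp]: "ssem k 0 = 0"
  by (simp add: ssem_def)

lemma scaled_norm_add_le:
  assumes "a \<in> rapid_seq" "b \<in> rapid_seq"
  shows "real n ^ k * cmod (a n + b n) \<le> ssem k a + ssem k b"
proof -
  have "real n ^ k * cmod (a n + b n) \<le> real n ^ k * cmod (a n) + real n ^ k * cmod (b n)"
    by (simp add: mult_left_mono norm_triangle_ineq flip: distrib_left)
  then show ?thesis using ssem_upper[OF assms(1), of n k] ssem_upper[OF assms(2), of n k]
    by linarith
qed

lemma ssem_add: "a \<in> rapid_seq \<Longrightarrow> b \<in> rapid_seq \<Longrightarrow> ssem k (a + b) \<le> ssem k a + ssem k b"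
  by (rule ssem_least) (simp add: scaled_norm_add_le)

lemma rapid_seq_add: "a \<in> rapid_seq \<Longrightarrow> b \<in> rapid_seq \<Longrightarrow> a + b \<in> rapid_seq"
  unfolding mem_rapid_seq_iff[of "a + b"] by (auto intro: scaled_norm_add_le)

lemma rapid_seq_uminus: "a \<in> rapid_seq \<Longrightarrow> - a \<in> rapid_seq"
  by (simp add: mem_rapid_seq_iff)

lemma rapid_seq_diff: "a \<in> rapid_seq \<Longrightarrow> b \<in> rapid_seq \<Longrightarrow> a - b \<in> rapid_seq"
  using rapid_seq_add[of a "- b"] rapid_seq_uminus[of b] by simp

section \<open>Topologies generated by seminorms\<close>

lemma openin_seminorm_topology_ball:
  assumes "x \<in> S" "r > 0"
  shows "openin (seminorm_topology S p) {y \<in> S. p k (y - x) < r}"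
  unfolding seminorm_topology_def
proof (rule topology_generated_by_Basis)
  show "{y \<in> S. p k (y - x) < r} \<in> {{y \<in> S. p k (y - x) < r} | k x r. x \<in> S \<and> r > 0}"
    using assms by (intro CollectI exI[of _ k] exI[of _ x] exI[of _ r]) simp
qed

lemma topspace_seminorm_topology:
  assumes "p k 0 = 0"
  shows "topspace (seminorm_topology S p) = S"
proof
  show "topspace (seminorm_topology S p) \<subseteq> S"
    unfolding seminorm_topology_def topology_generated_by_topspace by blast
  show "S \<subseteq> topspace (seminorm_topology S p)"
  proof
    fix x assume "x \<in> S"
    then have "x \<in> {y \<in> S. p k (y - x) < 1}" using assms by simp
    moreover have "{y \<in> S. p k (y - x) < 1} \<subseteq> topspace (seminorm_topology S p)"
      using openin_seminorm_topology_ball[OF \<open>x \<in> S\<close>, of 1 p k] by (rule openin_subset) simp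
    ultimately show "x \<in> topspace (seminorm_topology S p)" by blast
  qed
qed

lemma openin_seminorm_topology_preimage:
  fixes f :: "'v::ab_group_add \<Rightarrow> 'w::ab_group_add"
  assumes maps: "\<And>x. x \<in> S \<Longrightarrow> f x \<in> T"
    and diff_S: "\<And>x y. x \<in> S \<Longrightarrow> y \<in> S \<Longrightarrow> x - y \<in> S"
    and diff_T: "\<And>x y. x \<in> T \<Longrightarrow> y \<in> T \<Longrightarrow> x - y \<in> T"
    and f_diff: "\<And>x y. x \<in> S \<Longrightarrow> y \<in> S \<Longrightarrow> f (x - y) = f x - f y"
    and q_triangle: "\<And>a b. a \<in> T \<Longrightarrow> b \<in> T \<Longrightarrow> q (a + b) \<le> q a + q b"
    and p_zero: "\<And>k. p k 0 = 0"
    and bound: "C > 0" "\<And>u. u \<in> S \<Longrightarrow> q (f u) \<le> C * (p ka u + p kb u)"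
    and "w \<in> T"
  shows "openin (seminorm_topology S p) {x \<in> S. q (f x - w) < r}"
proof (subst openin_subopen, intro ballI)
  fix x0 assume "x0 \<in> {x \<in> S. q (f x - w) < r}"
  then have x0: "x0 \<in> S" "q (f x0 - w) < r" by auto
  define \<delta> where "\<delta> = (r - q (f x0 - w)) / (2 * C)"
  have \<delta>: "\<delta> > 0" using x0 bound(1) by (simp add: \<delta>_def)
  define W where "W = {y \<in> S. p ka (y - x0) < \<delta>} \<inter> {y \<in> S. p kb (y - x0) < \<delta>}"
  have "W \<subseteq> {x \<in> S. q (f x - w) < r}"
  proof
    fix y assume y: "y \<in> W"
    then have yS: "y \<in> S" by (simp add: W_def)
    have "f y - w = f (y - x0) + (f x0 - w)" using f_diff[OF yS x0(1)] by simp
    then have "q (f y - w) \<le> q (f (y - x0)) + q (f x0 - w)"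
      using q_triangle[OF maps[OF diff_S[OF yS x0(1)]] diff_T[OF maps[OF x0(1)] \<open>w \<in> T\<close>]]
      by (simp only:)
    also have "\<dots> \<le> C * (p ka (y - x0) + p kb (y - x0)) + q (f x0 - w)"
      using bound(2)[OF diff_S[OF yS x0(1)]] by simp
    also have "\<dots> < C * (2 * \<delta>) + q (f x0 - w)"
      using y bound(1) by (simp add: W_def)
    also have "\<dots> = r" using bound(1) by (simp add: \<delta>_def field_simps)
    finally show "y \<in> {x \<in> S. q (f x - w) < r}" using yS by simp
  qed
  moreover have "openin (seminorm_topology S p) W"
    unfolding W_def using x0(1) \<delta> by (intro openin_Int openin_seminorm_topology_ball)
  moreover have "x0 \<in> W" unfolding W_def using x0 \<delta> p_zero by simp
  ultimately show "\<exists>W. openin (seminorm_topology S p) W \<and> x0 \<in> W \<and> W \<subseteq> {x \<in> S. q (f x - w) < r}"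
    by blast
qed

lemma continuous_map_seminorm_topology:
  fixes f :: "'v::ab_group_add \<Rightarrow> 'w::ab_group_add"
  assumes maps: "\<And>x. x \<in> S \<Longrightarrow> f x \<in> T"
    and diff_S: "\<And>x y. x \<in> S \<Longrightarrow> y \<in> S \<Longrightarrow> x - y \<in> S"
    and diff_T: "\<And>x y. x \<in> T \<Longrightarrow> y \<in> T \<Longrightarrow> x - y \<in> T"
    and f_diff: "\<And>x y. x \<in> S \<Longrightarrow> y \<in> S \<Longrightarrow> f (x - y) = f x - f y"
    and q_triangle: "\<And>k a b. a \<in> T \<Longrightarrow> b \<in> T \<Longrightarrow> q k (a + b) \<le> q k a + q k b"
    and p_zero: "\<And>k. p k 0 = 0" and q_zero: "\<And>k. q k 0 = 0"
    and bound: "\<And>k. \<exists>k1 k2 C. C > 0 \<and> (\<forall>u\<in>S. q k (f u) \<le> C * (p k1 u + p k2 u))"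
  shows "continuous_map (seminorm_topology S p) (seminorm_topology T q) f"
  unfolding seminorm_topology_def[of T q]
proof (rule continuous_on_generated_topo)
  have top_S: "topspace (seminorm_topology S p) = S"
    by (rule topspace_seminorm_topology[of p 0]) (rule p_zero)
  have "topspace (seminorm_topology T q) = T"
    by (rule topspace_seminorm_topology[of q 0]) (rule q_zero)
  then show "f ` topspace (seminorm_topology S p) \<subseteq> \<Union> {{y \<in> T. q k (y - x) < r} | k x r. x \<in> T \<and> r > 0}"
    using maps unfolding top_S seminorm_topology_def topology_generated_by_topspace by auto
  fix U assume "U \<in> {{y \<in> T. q k (y - x) < r} | k x r. x \<in> T \<and> r > 0}"
  then obtain k w r where U: "U = {y \<in> T. q k (y - w) < r}" and w: "w \<in> T" by blast
  have preimage: "f -` U \<inter> topspace (seminorm_topology S p) = {x \<in> S. q k (f x - w) < r}"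
    using U top_S maps by auto
  obtain k1 k2 C where C: "C > 0" "\<forall>u\<in>S. q k (f u) \<le> C * (p k1 u + p k2 u)"
    using bound by blast
  show "openin (seminorm_topology S p) (f -` U \<inter> topspace (seminorm_topology S p))"
    unfolding preimage
    using maps diff_S diff_T f_diff q_triangle p_zero C w
    by (intro openin_seminorm_topology_preimage[where ka = k1 and kb = k2 and C = C]) auto
qed

section \<open>Fourier expansions in a complex Hilbert space\<close>

locale complex_onb =
  fixes J :: "'a::{real_inner, complete_space} \<Rightarrow> 'a" and e :: "nat \<Rightarrow> 'a"
  assumes complex_structure: "complex_structure J"
    and orthonormal_basis: "orthonormal_basis J e"
begin

abbreviation dist_Lspan :: "'a \<Rightarrow> nat \<Rightarrow> real" where
  "dist_Lspan x n \<equiv> infdist x (Lspan J e n)"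

lemma linear_J: "linear J"
  using complex_structure by (simp add: complex_structure_def)

lemma J_J [simp]: "J (J x) = - x"
  using complex_structure by (simp add: complex_structure_def)

lemma inner_J_J [simp]: "inner (J x) (J y) = inner x y"
  using complex_structure by (simp add: complex_structure_def)

lemmas J_add [simp] = linear_add[OF linear_J]
  and J_diff [simp] = linear_diff[OF linear_J]
  and J_scaleR [simp] = linear_scale[OF linear_J]
  and J_sum = linear_sum[OF linear_J]

lemma inner_J_left: "inner (J x) y = - inner x (J y)"
  using inner_J_J[of "J x" y] by simp

lemma inner_J_self [simp]: "inner x (J x) = 0"
  using inner_J_left[of x x] by (simp add: inner_commute)

lemma cinner_e_e: "cinner J (e i) (e j) = (if i = j then 1 else 0)"
  using orthonormal_basis by (simp add: orthonormal_basis_def)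

lemma inner_e_e: "inner (e i) (e j) = (if i = j then 1 else 0)"
  using arg_cong[OF cinner_e_e, of Re] by (simp add: cinner_def split: if_splits)

lemma inner_e_J_e [simp]: "inner (e i) (J (e j)) = 0"
  using arg_cong[OF cinner_e_e, of Im] by (simp add: cinner_def split: if_splits)

lemma inner_J_e_e [simp]: "inner (J (e i)) (e j) = 0"
  by (simp add: inner_J_left)

lemma norm_cscale: "norm (cscale J c x) = cmod c * norm x"
proof (rule power2_eq_imp_eq)
  have "(cmod c * norm x)\<^sup>2 = ((Re c)\<^sup>2 + (Im c)\<^sup>2) * inner x x"
    by (simp add: power_mult_distrib cmod_power2 power2_norm_eq_inner)
  then show "(norm (cscale J c x))\<^sup>2 = (cmod c * norm x)\<^sup>2"
    unfolding cscale_def power2_norm_eq_inner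
    by (simp add: inner_add_left inner_add_right algebra_simps power2_eq_square
        inner_commute[of "J x" x])
qed auto

lemma Re_fourier_coeffs [simp]: "Re (fourier_coeffs J e x n) = inner x (e n)"
  by (simp add: fourier_coeffs_def cinner_def)

lemma Im_fourier_coeffs [simp]: "Im (fourier_coeffs J e x n) = inner x (J (e n))"
  by (simp add: fourier_coeffs_def cinner_def)

lemma fourier_coeffs_add: "fourier_coeffs J e (x + y) = fourier_coeffs J e x + fourier_coeffs J e y"
  by (simp add: fun_eq_iff complex_eq_iff inner_add_left)

lemma fourier_coeffs_diff: "fourier_coeffs J e (x - y) = fourier_coeffs J e x - fourier_coeffs J e y"
  by (simp add: fun_eq_iff complex_eq_iff inner_diff_left)

lemma fourier_coeffs_cscale: "fourier_coeffs J e (cscale J c x) = seq_scale c (fourier_coeffs J e x)"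
  by (simp add: fun_eq_iff complex_eq_iff seq_scale_def cscale_def inner_add_left inner_J_left)

lemma Lspan_eq_span: "Lspan J e n = span (e ` {..<n} \<union> J ` e ` {..<n})"
  by (simp add: Lspan_def cspan_def)

lemma zero_in_Lspan: "0 \<in> Lspan J e n"
  by (simp add: Lspan_eq_span span_zero)

lemma Lspan_mono: "n \<le> N \<Longrightarrow> Lspan J e n \<subseteq> Lspan J e N"
  unfolding Lspan_eq_span by (rule span_mono) auto

definition fourier_sum :: "(nat \<Rightarrow> complex) \<Rightarrow> nat \<Rightarrow> 'a" where
  "fourier_sum a N = (\<Sum>m<N. Re (a m) *\<^sub>R e m + Im (a m) *\<^sub>R J (e m))"

lemma fourier_sum_in_Lspan: "fourier_sum a N \<in> Lspan J e N"
  unfolding fourier_sum_def Lspan_eq_span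
  by (intro span_sum span_add span_scale span_base) auto

lemma fourier_coeffs_fourier_sum: "fourier_coeffs J e (fourier_sum a N) n = (if n < N then a n else 0)"
proof -
  have "inner (fourier_sum a N) (e n) = (\<Sum>m<N. if m = n then Re (a n) else 0)"
    "inner (fourier_sum a N) (J (e n)) = (\<Sum>m<N. if m = n then Im (a n) else 0)"
    unfolding fourier_sum_def inner_sum_left
    by (rule sum.cong[OF refl], simp add: inner_add_left inner_e_e)+
  then show ?thesis by (simp add: complex_eq_iff)
qed

lemma fourier_sum_cong: "(\<And>m. m < n \<Longrightarrow> a m = b m) \<Longrightarrow> fourier_sum a n = fourier_sum b n"
  unfolding fourier_sum_def by (intro sum.cong) auto

lemma fourier_sum_add: "fourier_sum (a + b) n = fourier_sum a n + fourier_sum b n"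
  by (simp add: fourier_sum_def sum.distrib scaleR_add_left algebra_simps)

lemma fourier_sum_seq_scale: "fourier_sum (seq_scale c a) n = cscale J c (fourier_sum a n)"
  unfolding fourier_sum_def cscale_def J_sum scaleR_sum_right sum.distrib[symmetric]
  by (intro sum.cong refl) (simp add: seq_scale_def algebra_simps)

lemma fourier_remainder_orthogonal:
  assumes "y \<in> Lspan J e n"
  shows "orthogonal (x - fourier_sum (fourier_coeffs J e x) n) y"
  using assms unfolding Lspan_eq_span
proof (rule orthogonal_to_span)
  fix z assume "z \<in> e ` {..<n} \<union> J ` e ` {..<n}"
  then obtain m where "m < n" "z = e m \<or> z = J (e m)" by blast
  then show "orthogonal (x - fourier_sum (fourier_coeffs J e x) n) z"
    using fourier_coeffs_fourier_sum[of "fourier_coeffs J e x" n m]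
    by (auto simp: orthogonal_def inner_diff_left complex_eq_iff)
qed

lemma infdist_Lspan: "dist_Lspan x n = norm (x - fourier_sum (fourier_coeffs J e x) n)"
proof (rule antisym)
  let ?p = "fourier_sum (fourier_coeffs J e x) n"
  show "dist_Lspan x n \<le> norm (x - ?p)"
    using infdist_le[OF fourier_sum_in_Lspan] by (simp add: dist_norm)
  have nonempty: "Lspan J e n \<noteq> {}" using zero_in_Lspan by blast
  show "norm (x - ?p) \<le> dist_Lspan x n"
    unfolding infdist_notempty[OF nonempty]
  proof (rule cINF_greatest[OF nonempty])
    fix y assume "y \<in> Lspan J e n"
    then have "?p - y \<in> Lspan J e n"
      using fourier_sum_in_Lspan unfolding Lspan_eq_span by (blast intro: span_diff)
    then have orth: "orthogonal (x - ?p) (?p - y)" by (rule fourier_remainder_orthogonal)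
    have "(norm (x - y))\<^sup>2 = (norm ((x - ?p) + (?p - y)))\<^sup>2" by simp
    also have "\<dots> = (norm (x - ?p))\<^sup>2 + (norm (?p - y))\<^sup>2"
      by (rule norm_add_Pythagorean[OF orth])
    finally have "(norm (x - y))\<^sup>2 = (norm (x - ?p))\<^sup>2 + (norm (?p - y))\<^sup>2" .
    then have "(norm (x - ?p))\<^sup>2 \<le> (norm (x - y))\<^sup>2" by simp
    then show "norm (x - ?p) \<le> dist x y"
      unfolding dist_norm by (rule power2_le_imp_le) simp
  qed
qed

lemma dist_Lspan_Suc_sq:
  "(dist_Lspan x n)\<^sup>2 = (dist_Lspan x (Suc n))\<^sup>2 + (cmod (fourier_coeffs J e x n))\<^sup>2"
proof -
  define w where "w = inner x (e n) *\<^sub>R e n + inner x (J (e n)) *\<^sub>R J (e n)"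
  have split: "x - fourier_sum (fourier_coeffs J e x) n = (x - fourier_sum (fourier_coeffs J e x) (Suc n)) + w"
    by (simp add: fourier_sum_def w_def)
  have "w \<in> Lspan J e (Suc n)"
    unfolding w_def Lspan_eq_span by (intro span_add span_scale span_base) auto
  then have orth: "orthogonal (x - fourier_sum (fourier_coeffs J e x) (Suc n)) w"
    by (rule fourier_remainder_orthogonal)
  have "(norm w)\<^sup>2 = inner w w" by (rule power2_norm_eq_inner)
  also have "\<dots> = (inner x (e n))\<^sup>2 + (inner x (J (e n)))\<^sup>2"
    by (simp add: w_def inner_add_left inner_add_right inner_e_e power2_eq_square)
  also have "\<dots> = (cmod (fourier_coeffs J e x n))\<^sup>2" by (simp add: cmod_power2)
  finally show ?thesis
    unfolding infdist_Lspan split norm_add_Pythagorean[OF orth] by simp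
qed

lemma dist_Lspan_sq_telescope:
  "(dist_Lspan x n)\<^sup>2 = (dist_Lspan x (n + j))\<^sup>2 + (\<Sum>m\<in>{n..<n+j}. (cmod (fourier_coeffs J e x m))\<^sup>2)"
proof (induction j)
  case (Suc j)
  then show ?case using dist_Lspan_Suc_sq[of x "n + j"] by simp
qed simp

lemma dist_Lspan_0 [simp]: "dist_Lspan x 0 = norm x"
  by (simp add: Lspan_eq_span dist_norm)

lemma norm_fourier_coeffs_le_dist_Lspan: "cmod (fourier_coeffs J e x n) \<le> dist_Lspan x n"
proof (rule power2_le_imp_le)
  show "(cmod (fourier_coeffs J e x n))\<^sup>2 \<le> (dist_Lspan x n)\<^sup>2"
    using dist_Lspan_Suc_sq[of x n] zero_le_power2[of "dist_Lspan x (Suc n)"] by linarith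
qed (rule infdist_nonneg)

lemma dist_Lspan_le_Suc: "dist_Lspan x n \<le> dist_Lspan x (Suc n) + cmod (fourier_coeffs J e x n)"
proof (rule power2_le_imp_le)
  have "0 \<le> dist_Lspan x (Suc n) * cmod (fourier_coeffs J e x n)"
    by (simp add: infdist_nonneg)
  then show "(dist_Lspan x n)\<^sup>2 \<le> (dist_Lspan x (Suc n) + cmod (fourier_coeffs J e x n))\<^sup>2"
    unfolding power2_sum dist_Lspan_Suc_sq[of x n] by linarith
qed (simp add: infdist_nonneg)

lemma cspan_range_e_subset_Union_Lspan: "cspan J (range e) \<subseteq> (\<Union>n. Lspan J e n)"
proof
  fix x assume "x \<in> cspan J (range e)"
  then show "x \<in> (\<Union>n. Lspan J e n)"
    unfolding cspan_def
  proof (induction rule: span_induct_alt)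
    case base
    show ?case using zero_in_Lspan by blast
  next
    case (step c z y)
    then obtain m N where z: "z = e m \<or> z = J (e m)" and y: "y \<in> Lspan J e N" by blast
    let ?M = "max N (Suc m)"
    have "z \<in> Lspan J e ?M" using z by (auto simp: Lspan_eq_span intro: span_base)
    moreover have "y \<in> Lspan J e ?M" using y Lspan_mono[of N ?M] by auto
    ultimately have "c *\<^sub>R z + y \<in> Lspan J e ?M"
      unfolding Lspan_eq_span by (intro span_add span_scale)
    then show ?case by blast
  qed
qed

lemma dist_Lspan_tendsto_0: "(\<lambda>n. dist_Lspan x n) \<longlonglongrightarrow> 0"
proof (rule LIMSEQ_I)
  fix r :: real assume "r > 0"
  have "x \<in> closure (cspan J (range e))"
    using orthonormal_basis by (simp add: orthonormal_basis_def)
  then obtain y where "y \<in> cspan J (range e)" "dist y x < r"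
    using \<open>r > 0\<close> closure_approachable by blast
  then obtain N where y: "y \<in> Lspan J e N" "dist x y < r"
    using cspan_range_e_subset_Union_Lspan by (auto simp: dist_commute)
  have "dist_Lspan x n < r" if "N \<le> n" for n
    using infdist_le[of y "Lspan J e n" x] Lspan_mono[OF that] y by auto
  then show "\<exists>N. \<forall>n\<ge>N. norm (dist_Lspan x n - 0) < r"
    by (auto simp: infdist_nonneg)
qed

lemma tail_sums_tendsto_dist_Lspan_sq:
  "(\<lambda>j. \<Sum>m\<in>{n..<n+j}. (cmod (fourier_coeffs J e x m))\<^sup>2) \<longlonglongrightarrow> (dist_Lspan x n)\<^sup>2"
proof -
  have "(\<lambda>j. (dist_Lspan x n)\<^sup>2 - (dist_Lspan x (j + n))\<^sup>2) \<longlonglongrightarrow> (dist_Lspan x n)\<^sup>2 - 0\<^sup>2"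
    using LIMSEQ_ignore_initial_segment[OF dist_Lspan_tendsto_0[of x], of n] by (intro tendsto_intros)
  moreover have "(\<Sum>m\<in>{n..<n+j}. (cmod (fourier_coeffs J e x m))\<^sup>2) = (dist_Lspan x n)\<^sup>2 - (dist_Lspan x (j + n))\<^sup>2"
    for j using dist_Lspan_sq_telescope[of x n j] by (simp add: add.commute)
  ultimately show ?thesis by simp
qed

section \<open>The seminorms \<open>q\<^sub>k\<close>\<close>

lemma scaled_dist_Lspan_sq_le:
  assumes bound: "\<And>m. real m ^ Suc k * cmod (fourier_coeffs J e x m) \<le> B" and "1 \<le> n"
  shows "(real n ^ k * dist_Lspan x n)\<^sup>2 \<le> 2 * B\<^sup>2 / real n"
proof -
  have partial: "(real n ^ k)\<^sup>2 * (\<Sum>m\<in>{n..<n+j}. (cmod (fourier_coeffs J e x m))\<^sup>2) \<le> 2 * B\<^sup>2 / real n"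
    for j
  proof -
    have "real m * (real n ^ k * cmod (fourier_coeffs J e x m)) \<le> B" if "n \<le> m" for m
    proof -
      have "real m * (real n ^ k * cmod (fourier_coeffs J e x m))
          \<le> real m * (real m ^ k * cmod (fourier_coeffs J e x m))"
        using that by (intro mult_left_mono mult_right_mono power_mono) auto
      then show ?thesis using bound[of m] by (simp add: mult.assoc)
    qed
    then have "(\<Sum>m\<in>{n..<n+j}. (real n ^ k * cmod (fourier_coeffs J e x m))\<^sup>2) \<le> 2 * B\<^sup>2 / real n"
      using \<open>1 \<le> n\<close> by (intro tail_sum_squares_le) auto
    then show ?thesis by (simp add: sum_distrib_left power_mult_distrib)
  qed
  have "(\<lambda>j. (real n ^ k)\<^sup>2 * (\<Sum>m\<in>{n..<n+j}. (cmod (fourier_coeffs J e x m))\<^sup>2))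
      \<longlonglongrightarrow> (real n ^ k)\<^sup>2 * (dist_Lspan x n)\<^sup>2"
    by (intro tendsto_intros tail_sums_tendsto_dist_Lspan_sq)
  then have "(real n ^ k)\<^sup>2 * (dist_Lspan x n)\<^sup>2 \<le> 2 * B\<^sup>2 / real n"
    using partial by (intro LIMSEQ_le_const2) auto
  then show ?thesis by (simp add: power_mult_distrib)
qed

lemma scaled_dist_Lspan_le:
  assumes A: "\<And>m. real m ^ k * cmod (fourier_coeffs J e x m) \<le> A"
    and B: "\<And>m. real m ^ Suc k * cmod (fourier_coeffs J e x m) \<le> B"
  shows "real n ^ k * dist_Lspan x n \<le> A + 2 * B"
proof -
  have "0 \<le> real 0 ^ k * cmod (fourier_coeffs J e x 0)" by simp
  then have "0 \<le> A" using A[of 0] by linarith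
  have "0 \<le> B" using B[of 0] by simp
  have tail: "real m ^ k * dist_Lspan x m \<le> 2 * B" if "1 \<le> m" for m
  proof (rule power2_le_imp_le)
    have "(real m ^ k * dist_Lspan x m)\<^sup>2 \<le> 2 * B\<^sup>2 / real m"
      using scaled_dist_Lspan_sq_le[OF B that] .
    also have "\<dots> \<le> 2 * B\<^sup>2 / 1"
      using that by (intro frac_le) auto
    also have "\<dots> \<le> (2 * B)\<^sup>2"
      by (simp add: power2_eq_square)
    finally show "(real m ^ k * dist_Lspan x m)\<^sup>2 \<le> (2 * B)\<^sup>2" .
  qed (use \<open>0 \<le> B\<close> in simp)
  consider "1 \<le> n" | "n = 0" "k = 0" | "n = 0" "k > 0" by linarith
  then show ?thesis
  proof cases
    case 1
    then show ?thesis using tail[of n] \<open>0 \<le> A\<close> by linarith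
  next
    case 2
    then show ?thesis using dist_Lspan_le_Suc[of x 0] tail[of 1] A[of 0] by simp
  next
    case 3
    then show ?thesis using \<open>0 \<le> A\<close> \<open>0 \<le> B\<close> by (simp add: power_0_left)
  qed
qed

lemma mem_H_ra_iff: "x \<in> H_ra J e \<longleftrightarrow> (\<forall>k. \<exists>M. \<forall>n. real n ^ k * dist_Lspan x n \<le> M)"
  by (simp add: H_ra_def bdd_above_range_iff)

lemma H_ra_iff_fourier_coeffs_rapid_seq: "x \<in> H_ra J e \<longleftrightarrow> fourier_coeffs J e x \<in> rapid_seq"
proof
  assume x: "x \<in> H_ra J e"
  show "fourier_coeffs J e x \<in> rapid_seq"
    unfolding mem_rapid_seq_iff
  proof
    fix k
    obtain M where M: "\<And>n. real n ^ k * dist_Lspan x n \<le> M" using x mem_H_ra_iff by blast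
    have "real n ^ k * cmod (fourier_coeffs J e x n) \<le> real n ^ k * dist_Lspan x n" for n
      by (intro mult_left_mono norm_fourier_coeffs_le_dist_Lspan) simp
    then have "real n ^ k * cmod (fourier_coeffs J e x n) \<le> M" for n
      using M[of n] by (rule order_trans)
    then show "\<exists>M. \<forall>n. real n ^ k * cmod (fourier_coeffs J e x n) \<le> M" by blast
  qed
next
  assume a: "fourier_coeffs J e x \<in> rapid_seq"
  show "x \<in> H_ra J e"
    unfolding mem_H_ra_iff
  proof
    fix k
    obtain A B where "\<And>n. real n ^ k * cmod (fourier_coeffs J e x n) \<le> A"
      "\<And>n. real n ^ Suc k * cmod (fourier_coeffs J e x n) \<le> B"
      using a unfolding mem_rapid_seq_iff by meson
    then show "\<exists>M. \<forall>n. real n ^ k * dist_Lspan x n \<le> M"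
      using scaled_dist_Lspan_le by blast
  qed
qed

lemma qsem_upper: "x \<in> H_ra J e \<Longrightarrow> real n ^ k * dist_Lspan x n \<le> qsem J e k x"
  unfolding qsem_def by (rule cSUP_upper) (auto simp: H_ra_def)

lemma qsem_least: "(\<And>n. real n ^ k * dist_Lspan x n \<le> M) \<Longrightarrow> qsem J e k x \<le> M"
  unfolding qsem_def by (rule cSUP_least) auto

lemma qsem_nonneg: "x \<in> H_ra J e \<Longrightarrow> 0 \<le> qsem J e k x"
  using qsem_upper[of x 0 k] by (cases k) (auto intro: order_trans[OF norm_ge_zero])

lemma norm_le_qsem_0: "x \<in> H_ra J e \<Longrightarrow> norm x \<le> qsem J e 0 x"
  using qsem_upper[of x 0 0] by simp

lemma qsem_zero [simp]: "qsem J e k 0 = 0"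
  by (simp add: qsem_def zero_in_Lspan)

lemma ssem_le_qsem:
  assumes "x \<in> H_ra J e"
  shows "ssem k (fourier_coeffs J e x) \<le> qsem J e k x"
proof (rule ssem_least)
  fix n
  have "real n ^ k * cmod (fourier_coeffs J e x n) \<le> real n ^ k * dist_Lspan x n"
    by (intro mult_left_mono norm_fourier_coeffs_le_dist_Lspan) simp
  also have "\<dots> \<le> qsem J e k x" by (rule qsem_upper[OF assms])
  finally show "real n ^ k * cmod (fourier_coeffs J e x n) \<le> qsem J e k x" .
qed

lemma qsem_le_ssem: "x \<in> H_ra J e \<Longrightarrow>
    qsem J e k x \<le> ssem k (fourier_coeffs J e x) + 2 * ssem (Suc k) (fourier_coeffs J e x)"
  by (rule qsem_least, rule scaled_dist_Lspan_le; rule ssem_upper)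
    (simp_all add: H_ra_iff_fourier_coeffs_rapid_seq)

lemma dist_Lspan_add: "dist_Lspan (x + y) n \<le> dist_Lspan x n + dist_Lspan y n"
proof -
  have "x + y - fourier_sum (fourier_coeffs J e (x + y)) n
      = (x - fourier_sum (fourier_coeffs J e x) n) + (y - fourier_sum (fourier_coeffs J e y) n)"
    by (simp add: fourier_coeffs_add fourier_sum_add)
  then show ?thesis unfolding infdist_Lspan by (simp only: norm_triangle_ineq)
qed

lemma dist_Lspan_cscale: "dist_Lspan (cscale J c x) n = cmod c * dist_Lspan x n"
proof -
  have "fourier_sum (fourier_coeffs J e (cscale J c x)) n = cscale J c (fourier_sum (fourier_coeffs J e x) n)"
    by (simp only: fourier_coeffs_cscale fourier_sum_seq_scale)
  then have "cscale J c x - fourier_sum (fourier_coeffs J e (cscale J c x)) n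
      = cscale J c (x - fourier_sum (fourier_coeffs J e x) n)"
    by (simp add: cscale_def algebra_simps)
  then show ?thesis by (simp add: infdist_Lspan norm_cscale)
qed

lemma cscale_minus_one: "cscale J (- 1) x = - x"
  by (simp add: cscale_def)

lemma dist_Lspan_diff: "dist_Lspan (x - y) n \<le> dist_Lspan x n + dist_Lspan y n"
  using dist_Lspan_add[of x "cscale J (- 1) y" n] dist_Lspan_cscale[of "- 1" y n]
  by (simp add: cscale_minus_one)

lemma scaled_dist_Lspan_add_le:
  assumes "x \<in> H_ra J e" "y \<in> H_ra J e"
  shows "real n ^ k * dist_Lspan (x + y) n \<le> qsem J e k x + qsem J e k y"
proof -
  have "real n ^ k * dist_Lspan (x + y) n \<le> real n ^ k * dist_Lspan x n + real n ^ k * dist_Lspan y n"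
    by (simp add: dist_Lspan_add mult_left_mono flip: distrib_left)
  then show ?thesis using qsem_upper[OF assms(1), of n k] qsem_upper[OF assms(2), of n k]
    by linarith
qed

lemma H_ra_add: "x \<in> H_ra J e \<Longrightarrow> y \<in> H_ra J e \<Longrightarrow> x + y \<in> H_ra J e"
  unfolding mem_H_ra_iff[of "x + y"] by (blast intro: scaled_dist_Lspan_add_le)

lemma qsem_add: "x \<in> H_ra J e \<Longrightarrow> y \<in> H_ra J e \<Longrightarrow> qsem J e k (x + y) \<le> qsem J e k x + qsem J e k y"
  by (rule qsem_least) (rule scaled_dist_Lspan_add_le)

lemma scaled_dist_Lspan_cscale_le:
  assumes "x \<in> H_ra J e"
  shows "real n ^ k * dist_Lspan (cscale J c x) n \<le> cmod c * qsem J e k x"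
  using mult_left_mono[OF qsem_upper[OF assms, of n k], of "cmod c"]
  by (simp add: dist_Lspan_cscale mult.left_commute)

lemma H_ra_cscale: "x \<in> H_ra J e \<Longrightarrow> cscale J c x \<in> H_ra J e"
  unfolding mem_H_ra_iff[of "cscale J c x"] by (blast intro: scaled_dist_Lspan_cscale_le)

lemma H_ra_diff: "x \<in> H_ra J e \<Longrightarrow> y \<in> H_ra J e \<Longrightarrow> x - y \<in> H_ra J e"
  using H_ra_add[of x "cscale J (- 1) y"] H_ra_cscale[of y "- 1"] by (simp add: cscale_minus_one)

lemma qsem_cscale:
  assumes "x \<in> H_ra J e"
  shows "qsem J e k (cscale J c x) = cmod c * qsem J e k x"
proof (rule antisym)
  show "qsem J e k (cscale J c x) \<le> cmod c * qsem J e k x"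
    by (intro qsem_least scaled_dist_Lspan_cscale_le[OF assms])
  show "cmod c * qsem J e k x \<le> qsem J e k (cscale J c x)"
  proof (cases "c = 0")
    case True
    then show ?thesis using qsem_nonneg[OF H_ra_cscale[OF assms]] by simp
  next
    case False
    have "qsem J e k x \<le> qsem J e k (cscale J c x) / cmod c"
    proof (rule qsem_least)
      fix n
      have "real n ^ k * dist_Lspan x n = real n ^ k * dist_Lspan (cscale J c x) n / cmod c"
        using False by (simp add: dist_Lspan_cscale)
      also have "\<dots> \<le> qsem J e k (cscale J c x) / cmod c"
        using qsem_upper[OF H_ra_cscale[OF assms]] by (intro divide_right_mono) auto
      finally show "real n ^ k * dist_Lspan x n \<le> qsem J e k (cscale J c x) / cmod c" .
    qed
    then show ?thesis using False by (simp add: field_simps)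
  qed
qed

lemma zero_in_H_ra: "0 \<in> H_ra J e"
  unfolding mem_H_ra_iff using zero_in_Lspan by (auto simp: infdist_zero)

lemma seminorm_on_qsem: "seminorm_on (H_ra J e) (cscale J) (qsem J e k)"
  unfolding seminorm_on_def
  using zero_in_H_ra H_ra_add qsem_add H_ra_cscale qsem_cscale by blast

lemma Cauchy_if_qsem_0_Cauchy:
  assumes X: "\<And>n. X n \<in> H_ra J e"
    and Cauchy: "\<And>\<epsilon>. \<epsilon> > 0 \<Longrightarrow> \<exists>N. \<forall>m\<ge>N. \<forall>n\<ge>N. qsem J e 0 (X m - X n) < \<epsilon>"
  shows "Cauchy X"
proof (rule metric_CauchyI)
  fix \<epsilon> :: real assume "\<epsilon> > 0"
  then obtain N where "\<forall>m\<ge>N. \<forall>n\<ge>N. qsem J e 0 (X m - X n) < \<epsilon>" using Cauchy by blast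
  moreover have "dist (X m) (X n) \<le> qsem J e 0 (X m - X n)" for m n
    using norm_le_qsem_0[OF H_ra_diff[OF X X]] by (simp add: dist_norm)
  ultimately show "\<exists>N. \<forall>m\<ge>N. \<forall>n\<ge>N. dist (X m) (X n) < \<epsilon>"
    by (meson le_less_trans)
qed

lemma scaled_dist_Lspan_limit_le:
  assumes X: "\<And>n. X n \<in> H_ra J e" and "X \<longlonglongrightarrow> y"
    and N: "\<forall>m\<ge>N. \<forall>n\<ge>N. qsem J e k (X m - X n) < \<epsilon>" and "N \<le> n"
  shows "real m ^ k * dist_Lspan (X n - y) m \<le> \<epsilon>"
proof (rule LIMSEQ_le_const2)
  show "(\<lambda>p. real m ^ k * dist_Lspan (X n - X p) m) \<longlonglongrightarrow> real m ^ k * dist_Lspan (X n - y) m"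
    using \<open>X \<longlonglongrightarrow> y\<close> by (intro tendsto_intros)
  show "\<exists>N. \<forall>p\<ge>N. real m ^ k * dist_Lspan (X n - X p) m \<le> \<epsilon>"
  proof (intro exI allI impI)
    fix p assume "N \<le> p"
    then have "qsem J e k (X n - X p) < \<epsilon>" using N \<open>N \<le> n\<close> by blast
    then show "real m ^ k * dist_Lspan (X n - X p) m \<le> \<epsilon>"
      using qsem_upper[OF H_ra_diff[OF X[of n] X[of p]], of m k] by linarith
  qed
qed

lemma scaled_dist_Lspan_le_qsem_add:
  assumes "x \<in> H_ra J e" and "real m ^ k * dist_Lspan (x - y) m \<le> C"
  shows "real m ^ k * dist_Lspan y m \<le> qsem J e k x + C"
proof -
  have "dist_Lspan y m \<le> dist_Lspan x m + dist_Lspan (x - y) m"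
    using dist_Lspan_diff[of x "x - y" m] by simp
  then have "real m ^ k * dist_Lspan y m \<le> real m ^ k * dist_Lspan x m + real m ^ k * dist_Lspan (x - y) m"
    by (simp add: mult_left_mono flip: distrib_left)
  then show ?thesis using qsem_upper[OF assms(1), of m k] assms(2) by linarith
qed

lemma H_ra_complete:
  assumes X: "\<And>n. X n \<in> H_ra J e"
    and Cauchy: "\<And>k \<epsilon>. \<epsilon> > 0 \<Longrightarrow> \<exists>N. \<forall>m\<ge>N. \<forall>n\<ge>N. qsem J e k (X m - X n) < \<epsilon>"
  shows "\<exists>y\<in>H_ra J e. \<forall>k. (\<lambda>n. qsem J e k (X n - y)) \<longlonglongrightarrow> 0"
proof -
  have "Cauchy X" using X Cauchy by (rule Cauchy_if_qsem_0_Cauchy)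
  then obtain y where y: "X \<longlonglongrightarrow> y" using Cauchy_convergent_iff convergent_def by blast
  have uniform: "\<exists>N. \<forall>n\<ge>N. \<forall>m. real m ^ k * dist_Lspan (X n - y) m \<le> \<epsilon>" if "\<epsilon> > 0" for \<epsilon> k
    using Cauchy[OF that, of k] scaled_dist_Lspan_limit_le[OF X y] by blast
  have "y \<in> H_ra J e"
    unfolding mem_H_ra_iff
  proof
    fix k
    obtain N where "\<forall>m. real m ^ k * dist_Lspan (X N - y) m \<le> 1" using uniform[of 1 k] by auto
    then show "\<exists>M. \<forall>m. real m ^ k * dist_Lspan y m \<le> M"
      using scaled_dist_Lspan_le_qsem_add[OF X[of N]] by blast
  qed
  moreover have "(\<lambda>n. qsem J e k (X n - y)) \<longlonglongrightarrow> 0" for k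
  proof (rule LIMSEQ_I)
    fix r :: real assume "r > 0"
    then obtain N where N: "\<forall>n\<ge>N. \<forall>m. real m ^ k * dist_Lspan (X n - y) m \<le> r / 2"
      using uniform[of "r / 2" k] by auto
    have "norm (qsem J e k (X n - y) - 0) < r" if "N \<le> n" for n
      using qsem_least[of k "X n - y" "r / 2"] N that \<open>r > 0\<close>
        qsem_nonneg[OF H_ra_diff[OF X \<open>y \<in> H_ra J e\<close>]] by auto
    then show "\<exists>N. \<forall>n\<ge>N. norm (qsem J e k (X n - y) - 0) < r" by blast
  qed
  ultimately show ?thesis by blast
qed

lemma frechet_seminorms_qsem: "frechet_seminorms (H_ra J e) (cscale J) (qsem J e)"
  unfolding frechet_seminorms_def
proof (intro conjI allI ballI impI)
  show "seminorm_on (H_ra J e) (cscale J) (qsem J e k)" for k by (rule seminorm_on_qsem)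
  show "x = 0" if "x \<in> H_ra J e" "\<forall>k. qsem J e k x = 0" for x
    using norm_le_qsem_0[OF that(1)] that(2) by simp
  show "\<exists>y\<in>H_ra J e. \<forall>k. (\<lambda>n. qsem J e k (X n - y)) \<longlonglongrightarrow> 0"
    if "(\<forall>n. X n \<in> H_ra J e) \<and> (\<forall>k. \<forall>\<epsilon>>0. \<exists>N. \<forall>m\<ge>N. \<forall>n\<ge>N. qsem J e k (X m - X n) < \<epsilon>)" for X
    using that by (intro H_ra_complete) auto
qed

section \<open>The coefficient isomorphism\<close>

lemma fourier_coeffs_eq_0_imp_eq_0:
  assumes "\<And>n. fourier_coeffs J e x n = 0"
  shows "x = 0"
proof -
  have "(\<lambda>j. \<Sum>m\<in>{0..<0+j}. (cmod (fourier_coeffs J e x m))\<^sup>2) \<longlonglongrightarrow> (norm x)\<^sup>2"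
    using tail_sums_tendsto_dist_Lspan_sq[of x 0] by simp
  then have "(norm x)\<^sup>2 = 0" using assms by (simp add: LIMSEQ_const_iff)
  then show ?thesis by simp
qed

lemma inj_fourier_coeffs: "inj (fourier_coeffs J e)"
proof (rule injI)
  fix x y assume "fourier_coeffs J e x = fourier_coeffs J e y"
  then have "fourier_coeffs J e (x - y) n = 0" for n
    by (simp add: fourier_coeffs_diff)
  then have "x - y = 0" by (rule fourier_coeffs_eq_0_imp_eq_0)
  then show "x = y" by simp
qed

lemma norm_fourier_sum_diff_sq:
  "(norm (fourier_sum a (n + j) - fourier_sum a n))\<^sup>2 = (\<Sum>m\<in>{n..<n+j}. (cmod (a m))\<^sup>2)"
proof -
  let ?s = "fourier_sum a (n + j)"
  have "fourier_sum (fourier_coeffs J e ?s) n = fourier_sum a n"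
    by (rule fourier_sum_cong) (simp add: fourier_coeffs_fourier_sum)
  then have "(norm (?s - fourier_sum a n))\<^sup>2 = (dist_Lspan ?s n)\<^sup>2"
    by (simp add: infdist_Lspan)
  also have "\<dots> = (dist_Lspan ?s (n + j))\<^sup>2 + (\<Sum>m\<in>{n..<n+j}. (cmod (fourier_coeffs J e ?s m))\<^sup>2)"
    by (rule dist_Lspan_sq_telescope)
  also have "dist_Lspan ?s (n + j) = 0"
    by (rule infdist_zero[OF fourier_sum_in_Lspan])
  also have "(\<Sum>m\<in>{n..<n+j}. (cmod (fourier_coeffs J e ?s m))\<^sup>2) = (\<Sum>m\<in>{n..<n+j}. (cmod (a m))\<^sup>2)"
    by (rule sum.cong) (auto simp: fourier_coeffs_fourier_sum)
  finally show ?thesis by simp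
qed

lemma Cauchy_fourier_sum:
  assumes "a \<in> rapid_seq"
  shows "Cauchy (fourier_sum a)"
  unfolding Cauchy_altdef2
proof (intro allI impI)
  fix \<epsilon> :: real assume "\<epsilon> > 0"
  obtain B where B: "\<And>m. real m * cmod (a m) \<le> B"
    using assms unfolding mem_rapid_seq_iff by (metis power_one_right)
  obtain N0 :: nat where N0: "2 * B\<^sup>2 / \<epsilon>\<^sup>2 < real N0" using reals_Archimedean2 by blast
  define N where "N = Suc N0"
  have "2 * B\<^sup>2 < real N0 * \<epsilon>\<^sup>2"
    using N0 \<open>\<epsilon> > 0\<close> by (simp add: pos_divide_less_eq)
  also have "\<dots> \<le> real N * \<epsilon>\<^sup>2"
    by (intro mult_right_mono) (simp_all add: N_def)
  finally have small: "2 * B\<^sup>2 / real N < \<epsilon>\<^sup>2"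
    by (simp add: N_def pos_divide_less_eq mult.commute)
  have "dist (fourier_sum a n) (fourier_sum a N) < \<epsilon>" if "N \<le> n" for n
  proof -
    from \<open>N \<le> n\<close> obtain j where n: "n = N + j" using le_Suc_ex by blast
    have "(dist (fourier_sum a n) (fourier_sum a N))\<^sup>2 \<le> 2 * B\<^sup>2 / real N"
      unfolding n dist_norm norm_fourier_sum_diff_sq
      by (rule tail_sum_squares_le) (auto simp: B N_def)
    then have "(dist (fourier_sum a n) (fourier_sum a N))\<^sup>2 < \<epsilon>\<^sup>2" using small by linarith
    then show ?thesis by (rule power_less_imp_less_base) (use \<open>\<epsilon> > 0\<close> in simp)
  qed
  then show "\<exists>N. \<forall>n\<ge>N. dist (fourier_sum a n) (fourier_sum a N) < \<epsilon>" by blast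
qed

lemma tendsto_fourier_coeffs:
  assumes "(f \<longlongrightarrow> x) F"
  shows "((\<lambda>t. fourier_coeffs J e (f t) n) \<longlongrightarrow> fourier_coeffs J e x n) F"
  unfolding fourier_coeffs_def cinner_def by (intro tendsto_intros assms)

lemma fourier_coeffs_of_fourier_sum_limit:
  assumes "fourier_sum a \<longlonglongrightarrow> x"
  shows "fourier_coeffs J e x = a"
proof
  fix n
  have "(\<lambda>N. fourier_coeffs J e (fourier_sum a N) n) \<longlonglongrightarrow> fourier_coeffs J e x n"
    by (rule tendsto_fourier_coeffs[OF assms])
  moreover have "\<forall>\<^sub>F N in sequentially. fourier_coeffs J e (fourier_sum a N) n = a n"
    by (rule eventually_sequentiallyI[of "Suc n"]) (simp add: fourier_coeffs_fourier_sum)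
  ultimately have "(\<lambda>N. a n) \<longlonglongrightarrow> fourier_coeffs J e x n"
    by (simp add: tendsto_cong)
  then show "fourier_coeffs J e x n = a n" by (simp add: LIMSEQ_const_iff)
qed

lemma bij_betw_fourier_coeffs: "bij_betw (fourier_coeffs J e) (H_ra J e) rapid_seq"
proof (rule bij_betw_imageI)
  show "inj_on (fourier_coeffs J e) (H_ra J e)"
    using inj_fourier_coeffs by (rule inj_on_subset) simp
  show "fourier_coeffs J e ` H_ra J e = rapid_seq"
  proof
    show "fourier_coeffs J e ` H_ra J e \<subseteq> rapid_seq"
      using H_ra_iff_fourier_coeffs_rapid_seq by blast
    show "rapid_seq \<subseteq> fourier_coeffs J e ` H_ra J e"
    proof
      fix a assume a: "a \<in> rapid_seq"
      obtain x where "fourier_sum a \<longlonglongrightarrow> x"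
        using Cauchy_fourier_sum[OF a] Cauchy_convergent_iff convergent_def by blast
      then have "fourier_coeffs J e x = a" by (rule fourier_coeffs_of_fourier_sum_limit)
      then show "a \<in> fourier_coeffs J e ` H_ra J e"
        using a H_ra_iff_fourier_coeffs_rapid_seq by (metis image_eqI)
    qed
  qed
qed

lemma continuous_map_fourier_coeffs:
  "continuous_map (seminorm_topology (H_ra J e) (qsem J e)) (seminorm_topology rapid_seq ssem)
     (fourier_coeffs J e)"
proof (rule continuous_map_seminorm_topology)
  show "\<exists>k1 k2 C. C > 0 \<and> (\<forall>x\<in>H_ra J e. ssem k (fourier_coeffs J e x) \<le> C * (qsem J e k1 x + qsem J e k2 x))"
    for k
  proof (intro exI conjI ballI)
    fix x assume "x \<in> H_ra J e"
    then show "ssem k (fourier_coeffs J e x) \<le> 1 * (qsem J e k x + qsem J e k x)"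
      using ssem_le_qsem[of x k] qsem_nonneg[of x k] by simp
  qed simp
qed (auto simp: H_ra_iff_fourier_coeffs_rapid_seq[symmetric] H_ra_diff rapid_seq_diff
  fourier_coeffs_diff ssem_add)

lemma continuous_map_inv_fourier_coeffs:
  "continuous_map (seminorm_topology rapid_seq ssem) (seminorm_topology (H_ra J e) (qsem J e))
     (inv_into (H_ra J e) (fourier_coeffs J e))"
proof -
  let ?g = "inv_into (H_ra J e) (fourier_coeffs J e)"
  have g: "?g a \<in> H_ra J e" "fourier_coeffs J e (?g a) = a" if "a \<in> rapid_seq" for a
    using bij_betw_inv_into[OF bij_betw_fourier_coeffs] bij_betw_inv_into_right[OF bij_betw_fourier_coeffs]
      that by (auto simp: bij_betw_def)
  show ?thesis
  proof (rule continuous_map_seminorm_topology)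
    show "?g (a - b) = ?g a - ?g b" if "a \<in> rapid_seq" "b \<in> rapid_seq" for a b
    proof -
      have "fourier_coeffs J e (?g a - ?g b) = a - b" using g that by (simp add: fourier_coeffs_diff)
      then show ?thesis
        using bij_betw_inv_into_left[OF bij_betw_fourier_coeffs H_ra_diff[OF g(1) g(1)]] that by metis
    qed
    show "\<exists>k1 k2 C. C > 0 \<and> (\<forall>a\<in>rapid_seq. qsem J e k (?g a) \<le> C * (ssem k1 a + ssem k2 a))" for k
    proof (intro exI conjI ballI)
      fix a assume a: "a \<in> rapid_seq"
      have "qsem J e k (?g a) \<le> ssem k a + 2 * ssem (Suc k) a"
        using qsem_le_ssem[OF g(1)[OF a], of k] g(2)[OF a] by simp
      then show "qsem J e k (?g a) \<le> 2 * (ssem k a + ssem (Suc k) a)"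
        using ssem_nonneg[OF a, of k] by simp
    qed simp
  qed (use g in \<open>auto simp: H_ra_diff rapid_seq_diff qsem_add\<close>)
qed

lemma homeomorphic_map_fourier_coeffs:
  "homeomorphic_map (seminorm_topology (H_ra J e) (qsem J e)) (seminorm_topology rapid_seq ssem)
     (fourier_coeffs J e)"
proof -
  have "topspace (seminorm_topology (H_ra J e) (qsem J e)) = H_ra J e"
    by (rule topspace_seminorm_topology[of _ 0]) simp
  moreover have "topspace (seminorm_topology rapid_seq ssem) = rapid_seq"
    by (rule topspace_seminorm_topology[of _ 0]) simp
  ultimately show ?thesis
    unfolding homeomorphic_map_maps homeomorphic_maps_def
    using continuous_map_fourier_coeffs continuous_map_inv_fourier_coeffs bij_betw_fourier_coeffs
    by (intro exI[of _ "inv_into (H_ra J e) (fourier_coeffs J e)"])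
      (auto simp: bij_betw_inv_into_left bij_betw_inv_into_right)
qed

end

theorem theorem2p2:
  fixes J :: "'a::{real_inner, complete_space} \<Rightarrow> 'a" and e :: "nat \<Rightarrow> 'a"
  assumes "complex_structure J"
    and "orthonormal_basis J e"
  shows "frechet_seminorms (H_ra J e) (cscale J) (qsem J e)
    \<and> (\<forall>x. x \<in> H_ra J e \<longleftrightarrow> fourier_coeffs J e x \<in> rapid_seq)
    \<and> bij_betw (fourier_coeffs J e) (H_ra J e) rapid_seq
    \<and> (\<forall>x\<in>H_ra J e. \<forall>y\<in>H_ra J e. fourier_coeffs J e (x + y) = fourier_coeffs J e x + fourier_coeffs J e y)
    \<and> (\<forall>c. \<forall>x\<in>H_ra J e. fourier_coeffs J e (cscale J c x) = seq_scale c (fourier_coeffs J e x))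
    \<and> homeomorphic_map (seminorm_topology (H_ra J e) (qsem J e))
                        (seminorm_topology rapid_seq ssem) (fourier_coeffs J e)"
proof -
  interpret complex_onb J e using assms by (rule complex_onb.intro)
  show ?thesis
    using frechet_seminorms_qsem H_ra_iff_fourier_coeffs_rapid_seq bij_betw_fourier_coeffs
      fourier_coeffs_add fourier_coeffs_cscale homeomorphic_map_fourier_coeffs
    by blast
qed

end
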